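(* Let $(\Omega,\mathsf F)$ be an $n$-dimensional Funk metric space and $\phi$ the Minkowski norm on $\mathbb R^n$ with $\partial\Omega=\phi^{-1}(1)$ and $\mathsf F(x,y)=\phi(y+x\mathsf F(x,y))$. If $f$ is a measurable function on $\mathbb R$ with $f\circ\phi\in L^1(\Omega,\mathscr L^n)$, then $$\int_\Omega f\circ\phi\,d\mathfrak m_{BH}=n\omega_n\int_0^1f(t)t^{n-1}\,dt=n\omega_n\int_0^{+\infty}f(1-e^{-r})e^{-r}(1-e^{-r})^{n-1}\,dr.$$
   Context: A Funk metric space is a pair $(\Omega,\mathsf F)$ with $\Omega\subset\mathbb R^n$ ($n\ge2$) a bounded domain and $\mathsf F$ a Finsler metric on $\Omega$ satisfying $x+y/\mathsf F(x,y)\in\partial\Omega$ for all $x\in\Omega$, $y\neq0$; it is known that there is a unique Minkowski norm $\phi$ on $\mathbb R^n$ with $\partial\Omega=\phi^{-1}(1)$, $\mathsf F(x,y)=\phi(y+x\mathsf F(x,y))$, and $\Omega=\{\phi<1\}$. $\omega_n$ is the Lebesgue volume of the Euclidean unit ball in $\mathbb R^n$. The Busemann--Hausdorff measure is $d\mathfrak m_{BH}=\frac{\omega_n}{\mathrm{vol}(B_x)}dx^1\cdots dx^n$ where $B_x=\{y\in T_x\Omega:\mathsf F(x,y)<1\}$ and $\mathrm{vol}$ is Lebesgue measure. *)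

theory Defs
  imports "HOL-Analysis.Analysis"
begin

fun Ck_on :: "nat \<Rightarrow> 'a::euclidean_space set \<Rightarrow> ('a \<Rightarrow> real) \<Rightarrow> bool" where
  "Ck_on 0 S f = continuous_on S f"
| "Ck_on (Suc k) S f = (f differentiable_on S \<and>
      (\<forall>b\<in>Basis. Ck_on k S (\<lambda>x. frechet_derivative f (at x) b)))"

definition smooth_on :: "'a::euclidean_space set \<Rightarrow> ('a \<Rightarrow> real) \<Rightarrow> bool" where
  "smooth_on S f \<longleftrightarrow> (\<forall>k. Ck_on k S f)"

text \<open>Minkowski norm on R^n: nonnegative, smooth off the origin, positively 1-homogeneous,
  and strongly convex (the Hessian of phi^2/2 is positive definite at every y \<noteq> 0).\<close>
definition minkowski_norm :: "(real^'n \<Rightarrow> real) \<Rightarrow> bool" where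
  "minkowski_norm \<phi> \<longleftrightarrow>
     (\<forall>y. \<phi> y \<ge> 0) \<and>
     smooth_on (UNIV - {0}) \<phi> \<and>
     (\<forall>y. \<forall>c>0. \<phi> (c *\<^sub>R y) = c * \<phi> y) \<and>
     (\<forall>y v. y \<noteq> 0 \<longrightarrow> v \<noteq> 0 \<longrightarrow>
        deriv (deriv (\<lambda>t. (\<phi> (y + t *\<^sub>R v))\<^sup>2 / 2)) 0 > 0)"

definition finsler_metric :: "(real^'n) set \<Rightarrow> (real^'n \<Rightarrow> real^'n \<Rightarrow> real) \<Rightarrow> bool" where
  "finsler_metric \<Omega> F \<longleftrightarrow>
     (\<forall>x\<in>\<Omega>. \<forall>y. F x y \<ge> 0) \<and>
     smooth_on (\<Omega> \<times> (UNIV - {0})) (\<lambda>(x, y). F x y) \<and>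
     (\<forall>x\<in>\<Omega>. \<forall>y. \<forall>c>0. F x (c *\<^sub>R y) = c * F x y) \<and>
     (\<forall>x\<in>\<Omega>. \<forall>y v. y \<noteq> 0 \<longrightarrow> v \<noteq> 0 \<longrightarrow>
        deriv (deriv (\<lambda>t. (F x (y + t *\<^sub>R v))\<^sup>2 / 2)) 0 > 0)"

definition funk_metric_space :: "(real^'n) set \<Rightarrow> (real^'n \<Rightarrow> real^'n \<Rightarrow> real) \<Rightarrow> bool" where
  "funk_metric_space \<Omega> F \<longleftrightarrow>
     CARD('n) \<ge> 2 \<and> open \<Omega> \<and> connected \<Omega> \<and> \<Omega> \<noteq> {} \<and> bounded \<Omega> \<and>
     finsler_metric \<Omega> F \<and>
     (\<forall>x\<in>\<Omega>. \<forall>y. y \<noteq> 0 \<longrightarrow> x + (1 / F x y) *\<^sub>R y \<in> frontier \<Omega>)"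

definition omega :: "'n::finite itself \<Rightarrow> real" where
  "omega _ = measure lborel (ball (0 :: real^'n) 1)"

definition BH_measure :: "(real^'n) set \<Rightarrow> (real^'n \<Rightarrow> real^'n \<Rightarrow> real) \<Rightarrow> (real^'n) measure" where
  "BH_measure \<Omega> F = density (restrict_space lborel \<Omega>)
     (\<lambda>x. ennreal (omega TYPE('n) / measure lborel {y. F x y < 1}))"

end

theory Submission
  imports Defs
begin

(*
  Strong convexity of \<phi>\<^sup>2 / 2 forbids a local maximum of \<phi> along any line segment avoiding
  the origin, so \<Omega> = {\<phi> < 1} is convex. For x \<in> \<Omega> the ray x + s y therefore leaves \<Omega>
  exactly at s = 1 / F(x, y), whence F(x, y) < 1 iff x + y \<in> \<Omega>: every indicatrix B_x is the
  translate \<Omega> - x, and the Busemann-Hausdorff measure is \<omega>_n / vol \<Omega> times Lebesgue measure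
  on \<Omega>. By homogeneity vol {\<phi> < t} = t^n vol \<Omega>, i.e. under Lebesgue measure on \<Omega> the
  function \<phi> has density n vol(\<Omega>) t^(n-1) on [0, 1]; this gives the first identity, and the
  second is the substitution t = 1 - e^(-r).
*)

lemma Ck_on_Suc_has_derivative:
  assumes "Ck_on (Suc k) S f" "open S" "x \<in> S"
  shows "(f has_derivative frechet_derivative f (at x)) (at x)"
proof -
  have "f differentiable at x"
    using assms by (simp add: differentiable_on_eq_differentiable_at)
  then show ?thesis
    using frechet_derivative_works by blast
qed

lemma Ck_on_Suc_Suc_directional_derivative_differentiable:
  assumes Ck: "Ck_on (Suc (Suc k)) S f" and S: "open S" "x \<in> S"
  shows "(\<lambda>z. frechet_derivative f (at z) v) differentiable at x"
proof -
  have partials: "(\<lambda>z. frechet_derivative f (at z) b) differentiable at x" if "b \<in> Basis" for b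
    using Ck S that by (auto simp: differentiable_on_eq_differentiable_at)
  have expand: "(\<Sum>b\<in>Basis. (v \<bullet> b) * frechet_derivative f (at z) b) = frechet_derivative f (at z) v"
    if "z \<in> S" for z
  proof -
    have "linear (frechet_derivative f (at z))"
      using Ck_on_Suc_has_derivative[OF Ck S(1) that] has_derivative_linear by blast
    then have "frechet_derivative f (at z) (\<Sum>b\<in>Basis. (v \<bullet> b) *\<^sub>R b)
        = (\<Sum>b\<in>Basis. (v \<bullet> b) * frechet_derivative f (at z) b)"
      by (simp add: linear_sum linear_scale)
    then show ?thesis
      by (simp add: euclidean_representation)
  qed
  have "(\<lambda>z. \<Sum>b\<in>Basis. (v \<bullet> b) * frechet_derivative f (at z) b) differentiable at x"
    by (intro differentiable_sum differentiable_mult differentiable_const partials ballI finite_Basis)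
  then obtain D where "((\<lambda>z. \<Sum>b\<in>Basis. (v \<bullet> b) * frechet_derivative f (at z) b) has_derivative D) (at x)"
    unfolding differentiable_def by blast
  then have "((\<lambda>z. frechet_derivative f (at z) v) has_derivative D) (at x)"
    by (rule has_derivative_transform_within_open[OF _ S]) (rule expand)
  then show ?thesis
    unfolding differentiable_def by blast
qed

lemma has_real_derivative_along_line:
  assumes "(f has_derivative f') (at (y + t *\<^sub>R v))"
  shows "((\<lambda>s. f (y + s *\<^sub>R v)) has_real_derivative f' v) (at t)"
proof -
  have "((\<lambda>s. y + s *\<^sub>R v) has_derivative (\<lambda>h. h *\<^sub>R v)) (at t)"
    by (auto intro!: derivative_eq_intros)
  from has_derivative_compose[OF this assms]
  have "((\<lambda>s. f (y + s *\<^sub>R v)) has_derivative (\<lambda>h. f' (h *\<^sub>R v))) (at t)" .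
  moreover have "(\<lambda>h. f' (h *\<^sub>R v)) = (*) (f' v)"
    using linear_scale[OF has_derivative_linear[OF assms]] by (auto simp: mult.commute)
  ultimately show ?thesis
    by (simp add: has_field_derivative_def)
qed

lemma differentiable_along_line:
  fixes f :: "'a::real_normed_vector \<Rightarrow> real"
  assumes "f differentiable at (y + t *\<^sub>R v)"
  shows "(\<lambda>s. f (y + s *\<^sub>R v)) differentiable at t"
  using has_real_derivative_along_line assms
  unfolding differentiable_def has_field_derivative_def by blast

lemma Ck_on_half_square_along_line:
  fixes y v :: "'a::euclidean_space"
  assumes Ck: "Ck_on (Suc (Suc k)) S f" and S: "open S"
  defines "g' \<equiv> \<lambda>s. f (y + s *\<^sub>R v) * frechet_derivative f (at (y + s *\<^sub>R v)) v"
  shows "y + t *\<^sub>R v \<in> S \<Longrightarrow> ((\<lambda>s. (f (y + s *\<^sub>R v))\<^sup>2 / 2) has_real_derivative g' t) (at t)"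
    and "y + t *\<^sub>R v \<in> S \<Longrightarrow> g' differentiable at t"
proof -
  assume yt: "y + t *\<^sub>R v \<in> S"
  have Df: "(f has_derivative frechet_derivative f (at (y + t *\<^sub>R v))) (at (y + t *\<^sub>R v))"
    by (rule Ck_on_Suc_has_derivative[OF Ck S yt])
  have "((\<lambda>s. f (y + s *\<^sub>R v)) has_real_derivative frechet_derivative f (at (y + t *\<^sub>R v)) v) (at t)"
    by (rule has_real_derivative_along_line[OF Df])
  then show "((\<lambda>s. (f (y + s *\<^sub>R v))\<^sup>2 / 2) has_real_derivative g' t) (at t)"
    unfolding g'_def by (auto intro!: derivative_eq_intros)
  have "(\<lambda>s. f (y + s *\<^sub>R v)) differentiable at t"
    using Df by (intro differentiable_along_line) (auto simp: differentiable_def)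
  moreover have "(\<lambda>s. frechet_derivative f (at (y + s *\<^sub>R v)) v) differentiable at t"
    using Ck_on_Suc_Suc_directional_derivative_differentiable[OF Ck S yt]
    by (rule differentiable_along_line)
  ultimately show "g' differentiable at t"
    unfolding g'_def by (rule differentiable_mult)
qed

lemma exists_greater_if_second_deriv_pos:
  fixes g g' :: "real \<Rightarrow> real"
  assumes U: "open U" "t \<in> U"
    and g': "\<And>s. s \<in> U \<Longrightarrow> (g has_real_derivative g' s) (at s)"
    and g'_diff: "g' differentiable at t" and pos: "0 < deriv (deriv g) t"
  shows "\<exists>s\<in>U. g t < g s"
proof (rule ccontr)
  assume "\<not> (\<exists>s\<in>U. g t < g s)"
  then have max: "g s \<le> g t" if "s \<in> U" for s
    using that by (simp add: not_less)
  obtain d where d: "0 < d" "ball t d \<subseteq> U"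
    using U open_contains_ball by blast
  have crit: "g' t = 0"
    using d by (intro DERIV_local_max[OF g'[OF U(2)] d(1)]) (auto intro!: max simp: dist_real_def)
  have "deriv (deriv g) t = deriv g' t"
    using U DERIV_imp_deriv[OF g'] by (intro deriv_cong_ev) (auto simp: eventually_nhds)
  with pos have "0 < deriv g' t"
    by simp
  moreover have "(g' has_real_derivative deriv g' t) (at t)"
    using g'_diff by (simp add: DERIV_deriv_iff_real_differentiable)
  ultimately obtain e where e: "0 < e" "\<And>h. 0 < h \<Longrightarrow> h < e \<Longrightarrow> g' t < g' (t + h)"
    using DERIV_pos_inc_right by blast
  define h where "h = min e d / 2"
  have h: "0 < h" "h < e" "h < d"
    using e d unfolding h_def by auto
  have in_U: "s \<in> U" if "t \<le> s" "s \<le> t + h" for s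
    using that h d by (auto simp: dist_real_def)
  obtain \<xi> where \<xi>: "t < \<xi>" "\<xi> < t + h" "g (t + h) - g t = (t + h - t) * g' \<xi>"
    using MVT2[of t "t + h" g g'] h in_U g' by force
  have "0 < g' \<xi>"
    using e(2)[of "\<xi> - t"] \<xi> h crit by simp
  then have "g t < g (t + h)"
    using \<xi> h by (simp add: algebra_simps)
  then show False
    using max[OF in_U, of "t + h"] h by linarith
qed

lemma minkowski_norm_nonneg: "minkowski_norm \<phi> \<Longrightarrow> 0 \<le> \<phi> y"
  unfolding minkowski_norm_def by blast

lemma minkowski_norm_scaleR:
  assumes "minkowski_norm \<phi>" "0 \<le> c"
  shows "\<phi> (c *\<^sub>R y) = c * \<phi> y"
proof (cases "c = 0")
  case True
  have "\<phi> (2 *\<^sub>R 0) = 2 * \<phi> 0"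
    using assms(1) unfolding minkowski_norm_def by (metis zero_less_numeral)
  with True show ?thesis by simp
next
  case False
  with assms show ?thesis
    unfolding minkowski_norm_def by simp
qed

lemma minkowski_norm_Ck: "minkowski_norm \<phi> \<Longrightarrow> Ck_on k (UNIV - {0}) \<phi>"
  unfolding minkowski_norm_def smooth_on_def by blast

lemma minkowski_norm_isCont:
  assumes "minkowski_norm \<phi>" "x \<noteq> 0"
  shows "isCont \<phi> x"
  using Ck_on_Suc_has_derivative[OF minkowski_norm_Ck[OF assms(1), of "Suc 0"]] assms(2)
  by (auto intro: has_derivative_continuous)

lemma minkowski_norm_exists_greater_along_line:
  fixes \<phi> :: "real^'n \<Rightarrow> real"
  assumes mink: "minkowski_norm \<phi>" and "v \<noteq> 0"
    and U: "open U" "0 \<in> U" and nz: "\<And>s. s \<in> U \<Longrightarrow> y + s *\<^sub>R v \<noteq> 0"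
  shows "\<exists>s\<in>U. \<phi> y < \<phi> (y + s *\<^sub>R v)"
proof -
  let ?H = "\<lambda>s. (\<phi> (y + s *\<^sub>R v))\<^sup>2 / 2"
  let ?H' = "\<lambda>s. \<phi> (y + s *\<^sub>R v) * frechet_derivative \<phi> (at (y + s *\<^sub>R v)) v"
  have in_S: "y + s *\<^sub>R v \<in> UNIV - {0}" if "s \<in> U" for s
    using nz[OF that] by simp
  have "0 < deriv (deriv ?H) 0"
    using mink nz[OF U(2)] \<open>v \<noteq> 0\<close> unfolding minkowski_norm_def by simp
  moreover note Ck_on_half_square_along_line[OF minkowski_norm_Ck[OF mink]
      open_Diff[OF open_UNIV closed_singleton] in_S]
  ultimately obtain s where "s \<in> U" "?H 0 < ?H s"
    using exists_greater_if_second_deriv_pos[OF U, of ?H ?H'] U(2) by blast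
  moreover have "0 \<le> \<phi> (y + s *\<^sub>R v)"
    using mink unfolding minkowski_norm_def by blast
  ultimately show ?thesis
    by (auto dest: power_less_imp_less_base)
qed

lemma minkowski_norm_le_max_on_segment:
  fixes \<phi> :: "real^'n \<Rightarrow> real"
  assumes mink: "minkowski_norm \<phi>" and no0: "0 \<notin> closed_segment a b"
    and z: "z \<in> closed_segment a b"
  shows "\<phi> z \<le> max (\<phi> a) (\<phi> b)"
proof (cases "a = b")
  case True
  with z show ?thesis
    by simp
next
  case False
  define p where "p t = a + t *\<^sub>R (b - a)" for t
  have p_seg: "p t \<in> closed_segment a b" if "t \<in> {0..1}" for t
    using that unfolding p_def in_segment by (intro exI[of _ t]) (auto simp: algebra_simps)
  have "continuous_on {0..1} (\<lambda>t. \<phi> (p t))"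
  proof (intro continuous_at_imp_continuous_on ballI)
    fix t :: real assume "t \<in> {0..1}"
    then have "isCont \<phi> (p t)"
      using minkowski_norm_isCont[OF mink] p_seg no0 by metis
    moreover have "isCont p t"
      unfolding p_def by (intro continuous_intros)
    ultimately show "isCont (\<lambda>t. \<phi> (p t)) t"
      using continuous_at_compose[of t p \<phi>] by (simp add: o_def)
  qed
  then obtain t0 where t0: "t0 \<in> {0..1}" and t0_max: "\<And>t. t \<in> {0..1} \<Longrightarrow> \<phi> (p t) \<le> \<phi> (p t0)"
    using continuous_attains_sup[of "{0..1}" "\<lambda>t. \<phi> (p t)"] by auto
  have "t0 = 0 \<or> t0 = 1"
  proof (rule ccontr)
    assume "\<not> (t0 = 0 \<or> t0 = 1)"
    then have U: "open {-t0<..<1-t0}" "0 \<in> {-t0<..<1-t0}"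
      using t0 by auto
    have shift: "p t0 + s *\<^sub>R (b - a) = p (t0 + s)" for s
      unfolding p_def by (simp add: algebra_simps)
    have nz: "p t0 + s *\<^sub>R (b - a) \<noteq> 0" if "s \<in> {-t0<..<1-t0}" for s
      using that no0 p_seg[of "t0 + s"] unfolding shift by auto
    obtain s where "s \<in> {-t0<..<1-t0}" "\<phi> (p t0) < \<phi> (p t0 + s *\<^sub>R (b - a))"
      using minkowski_norm_exists_greater_along_line[OF mink _ U nz] False by auto
    then show False
      using t0_max[of "t0 + s"] unfolding shift by auto
  qed
  moreover obtain u where "u \<in> {0..1}" "z = p u"
    using z unfolding in_segment p_def by (auto simp: algebra_simps)
  ultimately show ?thesis
    using t0_max[of u] by (auto simp: p_def)
qed

lemma convex_minkowski_norm_sublevel: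
  fixes \<phi> :: "real^'n \<Rightarrow> real"
  assumes mink: "minkowski_norm \<phi>"
  shows "convex {v. \<phi> v < 1}"
  unfolding convex_contains_segment
proof (intro ballI subsetI)
  fix a b z
  assume a: "a \<in> {v. \<phi> v < 1}" and b: "b \<in> {v. \<phi> v < 1}" and z: "z \<in> closed_segment a b"
  show "z \<in> {v. \<phi> v < 1}"
  proof (cases "0 \<in> closed_segment a b")
    case True
    then have "z \<in> closed_segment 0 a \<union> closed_segment 0 b"
      using Un_closed_segment[OF True] z closed_segment_commute by blast
    then obtain c u where c: "c \<in> {a, b}" and u: "0 \<le> u" "u \<le> 1" and "z = u *\<^sub>R c"
      by (auto simp: in_segment)
    then have "\<phi> z = u * \<phi> c"
      using minkowski_norm_scaleR[OF mink] by simp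
    also have "\<dots> \<le> \<phi> c"
      using u minkowski_norm_nonneg[OF mink, of c] by (simp add: mult_left_le_one_le)
    finally show ?thesis
      using a b c by auto
  next
    case False
    then show ?thesis
      using minkowski_norm_le_max_on_segment[OF mink False z] a b by auto
  qed
qed

lemma borel_measurable_minkowski_norm:
  fixes \<phi> :: "real^'n \<Rightarrow> real"
  assumes "minkowski_norm \<phi>"
  shows "\<phi> \<in> borel_measurable borel"
proof (rule borel_measurable_continuous_countable_exceptions[of "{0}"])
  show "continuous_on (- {0}) \<phi>"
    using minkowski_norm_isCont[OF assms] by (intro continuous_at_imp_continuous_on) auto
qed simp

lemma minkowski_norm_sublevel_eq_scaleR:
  fixes \<phi> :: "real^'n \<Rightarrow> real"
  assumes mink: "minkowski_norm \<phi>" and a: "0 < a"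
  shows "{v. \<phi> v < a} = (\<lambda>x. a *\<^sub>R x + 0) ` {v. \<phi> v < 1}"
proof (intro set_eqI iffI)
  fix v assume "v \<in> {v. \<phi> v < a}"
  moreover have "\<phi> v = a * \<phi> ((1 / a) *\<^sub>R v)"
    using a minkowski_norm_scaleR[OF mink, of "1 / a" v] by simp
  ultimately have "\<phi> ((1 / a) *\<^sub>R v) < 1"
    using a by simp
  moreover have "v = a *\<^sub>R ((1 / a) *\<^sub>R v) + 0"
    using a by simp
  ultimately show "v \<in> (\<lambda>x. a *\<^sub>R x + 0) ` {v. \<phi> v < 1}"
    by blast
next
  fix v assume "v \<in> (\<lambda>x. a *\<^sub>R x + 0) ` {v. \<phi> v < 1}"
  then show "v \<in> {v. \<phi> v < a}"
    using a minkowski_norm_scaleR[OF mink] by auto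
qed

lemma emeasure_minkowski_norm_sublevel:
  fixes \<phi> :: "real^'n \<Rightarrow> real"
  assumes mink: "minkowski_norm \<phi>" and a: "0 < a"
  shows "emeasure lborel {v. \<phi> v < a} = ennreal (a ^ CARD('n)) * emeasure lborel {v. \<phi> v < 1}"
proof -
  have [measurable]: "\<phi> \<in> borel_measurable borel"
    by (rule borel_measurable_minkowski_norm[OF mink])
  have "emeasure lebesgue {v. \<phi> v < a} = \<bar>a\<bar> ^ DIM(real^'n) * emeasure lebesgue {v. \<phi> v < 1}"
    unfolding minkowski_norm_sublevel_eq_scaleR[OF mink a] by (rule emeasure_lebesgue_affine)
  then show ?thesis
    using a by (simp add: emeasure_completion)
qed

lemma measure_eqI_Iio:
  fixes M N :: "real measure"
  assumes sets: "sets M = sets borel" "sets N = sets borel"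
    and fin: "\<And>x. emeasure M {..<x} < \<infinity>"
    and eq: "\<And>x. emeasure M {..<x} = emeasure N {..<x}"
  shows "M = N"
proof (rule measure_eqI_generator_eq_countable)
  let ?E = "range (\<lambda>a::real. {..<a})"
  show "Int_stable ?E"
    by (auto simp: Int_stable_def intro: range_eqI[of _ _ "min _ _"])
  show "?E \<subseteq> Pow UNIV" "sets M = sigma_sets UNIV ?E" "sets N = sigma_sets UNIV ?E"
    unfolding sets borel_Iio by auto
  have "\<exists>q\<in>\<rat>. x < q" for x :: real
    using Rats_dense_in_real[of x "x + 1"] by auto
  then show "(\<lambda>a. {..<a}) ` \<rat> \<subseteq> ?E" "(\<Union>i\<in>\<rat>. {..<i}) = (UNIV :: real set)"
    "\<And>A. A \<in> (\<lambda>a. {..<a}) ` \<rat> \<Longrightarrow> emeasure M A \<noteq> \<infinity>"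
    using fin by (auto simp: less_top)
qed (auto intro: eq countable_rat)

lemma nn_integral_power_density_lessThan:
  fixes C x :: real and n :: nat
  assumes C: "0 \<le> C" and n: "0 < n"
  shows "(\<integral>\<^sup>+t. ennreal (C * (n * t ^ (n - 1)) * indicator {0..1} t) * indicator {..<x} t \<partial>lborel)
       = ennreal (C * (max 0 (min x 1)) ^ n)"
proof (cases "x \<le> 0")
  case True
  then have "ennreal (C * (n * t ^ (n - 1)) * indicator {0..1} t) * indicator {..<x} t = 0" for t :: real
    by (auto simp: indicator_def)
  then have "(\<integral>\<^sup>+t. ennreal (C * (n * t ^ (n - 1)) * indicator {0..1} t) * indicator {..<x} t \<partial>lborel)
      = (\<integral>\<^sup>+(t::real). 0 \<partial>lborel)"
    by (simp only:)
  then show ?thesis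
    using True n by (simp add: power_0_left)
next
  case False
  define m where "m = min x 1"
  have m: "0 < m" "m \<le> 1"
    using False unfolding m_def by auto
  have "AE t in lborel. ennreal (C * (n * t ^ (n - 1)) * indicator {0..1} t) * indicator {..<x} t
      = ennreal (C * (n * t ^ (n - 1))) * indicator {0..m} t"
    using AE_lborel_singleton[of m] by eventually_elim (auto simp: m_def indicator_def)
  then have "(\<integral>\<^sup>+t. ennreal (C * (n * t ^ (n - 1)) * indicator {0..1} t) * indicator {..<x} t \<partial>lborel)
      = (\<integral>\<^sup>+t. ennreal (C * (n * t ^ (n - 1))) * indicator {0..m} t \<partial>lborel)"
    by (rule nn_integral_cong_AE)
  also have "\<dots> = ennreal (C * m ^ n - C * 0 ^ n)"
    using m C n by (intro nn_integral_FTC_Icc) (auto intro!: derivative_eq_intros)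
  finally show ?thesis
    using m n by (simp add: m_def power_0_left)
qed

lemma distr_minkowski_norm:
  fixes \<phi> :: "real^'n \<Rightarrow> real"
  assumes mink: "minkowski_norm \<phi>" and bdd: "bounded {v. \<phi> v < 1}"
  defines "V \<equiv> measure lborel {v. \<phi> v < 1}"
  shows "distr (restrict_space lborel {v. \<phi> v < 1}) borel \<phi>
       = density lborel (\<lambda>t. ennreal (V * (CARD('n) * t ^ (CARD('n) - 1)) * indicator {0..1} t))"
    (is "?D = ?N")
proof (rule measure_eqI_Iio)
  have [measurable]: "\<phi> \<in> borel_measurable borel"
    by (rule borel_measurable_minkowski_norm[OF mink])
  have EV: "emeasure lborel {v. \<phi> v < 1} = ennreal V"
    unfolding V_def using emeasure_bounded_finite[OF bdd] by (simp add: emeasure_eq_ennreal_measure)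
  have sublevel: "emeasure lborel {v. \<phi> v < c} = ennreal (V * c ^ CARD('n))" if "0 \<le> c" for c
  proof (cases "c = 0")
    case True
    then have "{v. \<phi> v < c} = {}"
      using minkowski_norm_nonneg[OF mink] by (auto simp: not_less)
    with True show ?thesis
      by (simp add: power_0_left)
  next
    case False
    with that show ?thesis
      using emeasure_minkowski_norm_sublevel[OF mink, of c] EV
      by (simp add: ennreal_mult'' mult.commute)
  qed
  have lhs: "emeasure ?D {..<x} = ennreal (V * (max 0 (min x 1)) ^ CARD('n))" for x
  proof -
    have "emeasure ?D {..<x} = emeasure lborel ({v. \<phi> v < 1} \<inter> \<phi> -` {..<x})"
      by (subst emeasure_distr)
        (auto simp: measurable_restrict_space1 emeasure_restrict_space space_restrict_space Int_commute)
    also have "{v. \<phi> v < 1} \<inter> \<phi> -` {..<x} = {v. \<phi> v < max 0 (min x 1)}"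
    proof (intro set_eqI)
      fix v
      have "0 \<le> \<phi> v"
        by (rule minkowski_norm_nonneg[OF mink])
      then show "v \<in> {v. \<phi> v < 1} \<inter> \<phi> -` {..<x} \<longleftrightarrow> v \<in> {v. \<phi> v < max 0 (min x 1)}"
        by auto
    qed
    finally show ?thesis
      by (simp add: sublevel)
  qed
  show "sets ?D = sets borel" "sets ?N = sets borel"
    by auto
  show "emeasure ?D {..<x} < \<infinity>" for x
    by (simp add: lhs)
  show "emeasure ?D {..<x} = emeasure ?N {..<x}" for x
    unfolding lhs using nn_integral_power_density_lessThan[of V]
    by (subst emeasure_density) (auto simp: V_def)
qed

lemma emeasure_minkowski_norm_sublevel_pos:
  fixes \<phi> :: "real^'n \<Rightarrow> real"
  assumes mink: "minkowski_norm \<phi>"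
  shows "0 < emeasure lborel {v. \<phi> v < 1}"
proof (rule ccontr)
  assume "\<not> 0 < emeasure lborel {v. \<phi> v < 1}"
  then have "emeasure lborel {v. \<phi> v < 1} = 0"
    by (simp add: zero_less_iff_neq_zero)
  then have "{v. \<phi> v < real (Suc k)} \<in> null_sets lborel" for k
    using emeasure_minkowski_norm_sublevel[OF mink, of "real (Suc k)"]
      borel_measurable_minkowski_norm[OF mink] by (simp add: null_sets_def)
  then have "(\<Union>k. {v. \<phi> v < real (Suc k)}) \<in> null_sets lborel"
    by blast
  moreover have "(\<Union>k. {v. \<phi> v < real (Suc k)}) = UNIV"
  proof (intro set_eqI iffI UNIV_I)
    fix x
    obtain k where "\<phi> x < real k"
      using reals_Archimedean2 by blast
    then show "x \<in> (\<Union>k. {v. \<phi> v < real (Suc k)})"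
      by (intro UN_I[of k]) auto
  qed
  ultimately have "emeasure lborel (UNIV :: (real^'n) set) = 0"
    by (metis null_setsD1)
  then show False
    by simp
qed

lemma measure_minkowski_norm_sublevel_pos:
  fixes \<phi> :: "real^'n \<Rightarrow> real"
  assumes "minkowski_norm \<phi>" and "bounded {v. \<phi> v < 1}"
  shows "0 < measure lborel {v. \<phi> v < 1}"
  using emeasure_minkowski_norm_sublevel_pos[OF assms(1)] emeasure_bounded_finite[OF assms(2)]
  by (simp add: emeasure_eq_ennreal_measure)

lemma set_integrable_minkowski_norm:
  fixes \<phi> :: "real^'n \<Rightarrow> real" and f :: "real \<Rightarrow> real"
  assumes mink: "minkowski_norm \<phi>" and bdd: "bounded {v. \<phi> v < 1}"
    and f[measurable]: "f \<in> borel_measurable borel"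
    and int: "set_integrable lborel {v. \<phi> v < 1} (\<lambda>x. f (\<phi> x))"
  shows "set_integrable lborel {0..1} (\<lambda>t. f t * t ^ (CARD('n) - 1))"
proof -
  let ?M = "restrict_space lborel {v. \<phi> v < 1}"
  define c where "c = CARD('n) * measure lborel {v. \<phi> v < 1}"
  have "0 < c"
    unfolding c_def using measure_minkowski_norm_sublevel_pos[OF mink bdd] by simp
  have [measurable]: "\<phi> \<in> borel_measurable borel"
    by (rule borel_measurable_minkowski_norm[OF mink])
  have \<phi>_M: "\<phi> \<in> measurable ?M borel"
    by (rule measurable_restrict_space1) simp
  have "integrable ?M (\<lambda>x. f (\<phi> x))"
    using int unfolding set_integrable_def by (subst integrable_restrict_space) auto
  then have "integrable (distr ?M borel \<phi>) f"
    by (subst integrable_distr_eq[OF \<phi>_M f])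
  then have "integrable lborel (\<lambda>t. (c * (t ^ (CARD('n) - 1)) * indicator {0..1} t) * f t)"
    unfolding distr_minkowski_norm[OF mink bdd]
    by (subst (asm) integrable_density) (auto simp: c_def ac_simps indicator_def)
  then have "integrable lborel (\<lambda>t. (1 / c) * ((c * (t ^ (CARD('n) - 1)) * indicator {0..1} t) * f t))"
    by (rule integrable_mult_right)
  then show ?thesis
    unfolding set_integrable_def using \<open>0 < c\<close> by (simp add: ac_simps)
qed

lemma set_integral_minkowski_norm:
  fixes \<phi> :: "real^'n \<Rightarrow> real" and f :: "real \<Rightarrow> real"
  assumes mink: "minkowski_norm \<phi>" and bdd: "bounded {v. \<phi> v < 1}"
    and f[measurable]: "f \<in> borel_measurable borel"
  shows "(LINT x:{v. \<phi> v < 1}|lborel. f (\<phi> x))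
           = CARD('n) * measure lborel {v. \<phi> v < 1} * (LBINT t=0..1. f t * t ^ (CARD('n) - 1))"
proof -
  let ?M = "restrict_space lborel {v. \<phi> v < 1}"
  define c where "c = CARD('n) * measure lborel {v. \<phi> v < 1}"
  have [measurable]: "\<phi> \<in> borel_measurable borel"
    by (rule borel_measurable_minkowski_norm[OF mink])
  have "(LINT x:{v. \<phi> v < 1}|lborel. f (\<phi> x)) = integral\<^sup>L ?M (\<lambda>x. f (\<phi> x))"
    unfolding set_lebesgue_integral_def by (subst integral_restrict_space) auto
  also have "\<dots> = integral\<^sup>L (distr ?M borel \<phi>) f"
    by (rule integral_distr[symmetric]) (auto intro: measurable_restrict_space1)
  also have "\<dots> = (\<integral>t. (c * (t ^ (CARD('n) - 1)) * indicator {0..1} t) * f t \<partial>lborel)"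
    unfolding distr_minkowski_norm[OF mink bdd]
    by (subst integral_density) (auto simp: c_def ac_simps indicator_def)
  also have "\<dots> = c * (LINT t:{0..1}|lborel. f t * t ^ (CARD('n) - 1))"
    unfolding set_lebesgue_integral_def by (simp add: ac_simps)
  also have "\<dots> = c * (LBINT t=0..1. f t * t ^ (CARD('n) - 1))"
    using interval_integral_Icc[of 0 1 "\<lambda>t. f t * t ^ (CARD('n) - 1)"]
    by (simp add: zero_ereal_def one_ereal_def)
  finally show ?thesis
    unfolding c_def .
qed

lemma interval_integral_exp_substitution:
  fixes h :: "real \<Rightarrow> real"
  assumes [measurable]: "h \<in> borel_measurable borel"
    and h_int: "set_integrable lborel {0<..<1} h"
  shows "(LBINT t=0..1. h t) = (LBINT r=0..\<infinity>. exp (- r) * h (1 - exp (- r)))"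
proof -
  define g where "g r = 1 - exp (- r)" for r :: real
  have g_image: "g ` {0<..} = {0<..<1}"
  proof (intro set_eqI iffI)
    fix t :: real assume t: "t \<in> {0<..<1}"
    then have "g (- ln (1 - t)) = t" and "- ln (1 - t) \<in> {0<..}"
      unfolding g_def by auto
    then show "t \<in> g ` {0<..}"
      by (metis image_eqI)
  qed (auto simp: g_def)
  have "inj_on g {0<..}"
    unfolding g_def by (intro inj_onI) simp
  moreover have "(g has_field_derivative exp (- r)) (at r within {0<..})" for r
    unfolding g_def by (auto intro!: derivative_eq_intros)
  moreover have "h absolutely_integrable_on {0<..<1}"
    using h_int unfolding set_integrable_def by (subst integrable_completion) auto
  ultimately have "(\<lambda>r. exp (- r) * h (g r)) absolutely_integrable_on {0<..}"
    and eq: "integral {0<..} (\<lambda>r. exp (- r) * h (g r)) = integral {0<..<1} h"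
    using has_absolute_integral_change_of_variables_1'[of "{0<..}" g "\<lambda>r. exp (- r)" h]
    unfolding g_image by auto
  then have int_r: "set_integrable lborel {0<..} (\<lambda>r. exp (- r) * h (g r))"
    unfolding set_integrable_def g_def by (subst (asm) integrable_completion) auto
  have "(LBINT t=0..1. h t) = (LBINT t:{0<..<1}. h t)"
    using interval_integral_Ioo[of 0 1 h] by (simp add: zero_ereal_def one_ereal_def)
  also have "\<dots> = integral {0<..<1} h"
    by (rule set_borel_integral_eq_integral(2)[OF h_int])
  also have "\<dots> = (LBINT r:{0<..}. exp (- r) * h (g r))"
    unfolding eq[symmetric] by (rule set_borel_integral_eq_integral(2)[OF int_r, symmetric])
  also have "\<dots> = (LBINT r=0..\<infinity>. exp (- r) * h (1 - exp (- r)))"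
    unfolding g_def by (rule interval_lebesgue_integral_0_infty(2)[symmetric])
  finally show ?thesis .
qed

lemma funk_metric_zero:
  assumes "funk_metric_space \<Omega> F" "x \<in> \<Omega>"
  shows "F x 0 = 0"
proof -
  have "F x (2 *\<^sub>R 0) = 2 * F x 0"
    using assms unfolding funk_metric_space_def finsler_metric_def by (metis zero_less_numeral)
  then show ?thesis
    by simp
qed

lemma funk_metric_lt_one_iff:
  fixes \<Omega> :: "(real^'n) set"
  assumes funk: "funk_metric_space \<Omega> F" and conv: "convex \<Omega>" and x: "x \<in> \<Omega>"
  shows "F x y < 1 \<longleftrightarrow> x + y \<in> \<Omega>"
proof (cases "y = 0")
  case True
  then show ?thesis
    using funk_metric_zero[OF funk x] x by simp
next
  case False
  define c where "c = F x y"
  define p where "p = x + (1 / c) *\<^sub>R y"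
  have "open \<Omega>"
    using funk unfolding funk_metric_space_def by blast
  have "0 \<le> c"
    using funk x unfolding c_def funk_metric_space_def finsler_metric_def by blast
  have "p \<in> frontier \<Omega>"
    using funk x False unfolding p_def c_def funk_metric_space_def by blast
  then have "p \<in> closure \<Omega>" "p \<notin> \<Omega>"
    using interior_open[OF \<open>open \<Omega>\<close>] by (auto simp: frontier_def)
  moreover have "p = x" if "c = 0"
    using that unfolding p_def by simp
  ultimately have "c \<noteq> 0"
    using x by blast
  show ?thesis
  proof
    assume "F x y < 1"
    then have "x + y \<in> open_segment x p"
      using \<open>0 \<le> c\<close> \<open>c \<noteq> 0\<close> \<open>p \<notin> \<Omega>\<close> x unfolding in_segment(2) c_def[symmetric]
      by (intro conjI exI[of _ c]) (auto simp: p_def algebra_simps)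
    moreover have "open_segment x p \<subseteq> \<Omega>"
      using in_interior_closure_convex_segment[OF conv _ \<open>p \<in> closure \<Omega>\<close>] x
        interior_open[OF \<open>open \<Omega>\<close>] by auto
    ultimately show "x + y \<in> \<Omega>"
      by blast
  next
    assume "x + y \<in> \<Omega>"
    show "F x y < 1"
    proof (rule ccontr)
      assume "\<not> F x y < 1"
      then have "p \<in> closed_segment x (x + y)"
        using \<open>c \<noteq> 0\<close> unfolding in_segment(1) c_def[symmetric]
        by (intro exI[of _ "1 / c"]) (auto simp: p_def algebra_simps)
      then show False
        using convex_contains_segment[THEN iffD1, OF conv] x \<open>x + y \<in> \<Omega>\<close> \<open>p \<notin> \<Omega>\<close> by blast
    qed
  qed
qed

lemma measure_funk_indicatrix:
  fixes \<Omega> :: "(real^'n) set"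
  assumes funk: "funk_metric_space \<Omega> F" and conv: "convex \<Omega>" and x: "x \<in> \<Omega>"
  shows "measure lborel {y. F x y < 1} = measure lborel \<Omega>"
proof -
  have "open \<Omega>"
    using funk unfolding funk_metric_space_def by blast
  have "{y. F x y < 1} = {y. x + y \<in> \<Omega>}"
    using funk_metric_lt_one_iff[OF funk conv x] by simp
  also have "\<dots> = (+) (- x) ` \<Omega>"
    by (force intro: image_eqI[where x = "x + _"])
  finally have "{y. F x y < 1} = (+) (- x) ` \<Omega>" .
  moreover have "open ((+) (- x) ` \<Omega>)"
    using \<open>open \<Omega>\<close> by (rule open_translation)
  ultimately show ?thesis
    using measure_translation[of "- x" \<Omega>] \<open>open \<Omega>\<close> by simp
qed

lemma BH_measure_funk:
  fixes \<Omega> :: "(real^'n) set"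
  assumes funk: "funk_metric_space \<Omega> F" and conv: "convex \<Omega>"
  shows "BH_measure \<Omega> F
    = density (restrict_space lborel \<Omega>) (\<lambda>_. ennreal (omega TYPE('n) / measure lborel \<Omega>))"
proof -
  \<comment> \<open>x \<mapsto> vol B_x is not known to be measurable, so density_cong does not apply.\<close>
  have "(\<lambda>A. \<integral>\<^sup>+x. ennreal (omega TYPE('n) / measure lborel {y. F x y < 1}) * indicator A x \<partial>restrict_space lborel \<Omega>)
      = (\<lambda>A. \<integral>\<^sup>+x. ennreal (omega TYPE('n) / measure lborel \<Omega>) * indicator A x \<partial>restrict_space lborel \<Omega>)"
    by (intro ext nn_integral_cong) (simp add: space_restrict_space measure_funk_indicatrix[OF funk conv])
  then show ?thesis
    unfolding BH_measure_def density_def by simp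
qed

lemma integral_BH_measure_funk:
  fixes \<Omega> :: "(real^'n) set" and g :: "real^'n \<Rightarrow> real"
  assumes funk: "funk_metric_space \<Omega> F" and conv: "convex \<Omega>"
    and [measurable]: "g \<in> borel_measurable borel"
  shows "integral\<^sup>L (BH_measure \<Omega> F) g = omega TYPE('n) / measure lborel \<Omega> * (LINT x:\<Omega>|lborel. g x)"
proof -
  have [measurable]: "\<Omega> \<in> sets borel"
    using funk unfolding funk_metric_space_def by auto
  have "0 \<le> omega TYPE('n) / measure lborel \<Omega>"
    unfolding omega_def by simp
  then show ?thesis
    unfolding BH_measure_funk[OF funk conv] set_lebesgue_integral_def
    by (subst integral_density) (auto intro: measurable_restrict_space1 simp: integral_restrict_space)
qed

theorem lemma4p7:
  fixes \<Omega> :: "(real^'n) set" and F :: "real^'n \<Rightarrow> real^'n \<Rightarrow> real"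
    and \<phi> :: "real^'n \<Rightarrow> real" and f :: "real \<Rightarrow> real"
  assumes funk: "funk_metric_space \<Omega> F"
    and mink: "minkowski_norm \<phi>"
    and bd: "frontier \<Omega> = {v. \<phi> v = 1}"
    and FF: "\<forall>x\<in>\<Omega>. \<forall>y. F x y = \<phi> (y + F x y *\<^sub>R x)"
    and Om: "\<Omega> = {v. \<phi> v < 1}"
    and fmeas: "f \<in> borel_measurable borel"
    and fint: "set_integrable lborel \<Omega> (\<lambda>x. f (\<phi> x))"
  shows "integral\<^sup>L (BH_measure \<Omega> F) (\<lambda>x. f (\<phi> x))
           = real CARD('n) * omega TYPE('n) * (LBINT t=0..1. f t * t ^ (CARD('n) - 1))
       \<and> real CARD('n) * omega TYPE('n) * (LBINT t=0..1. f t * t ^ (CARD('n) - 1))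
           = real CARD('n) * omega TYPE('n) *
             (LBINT r=0..\<infinity>. f (1 - exp (- r)) * exp (- r) * (1 - exp (- r)) ^ (CARD('n) - 1))"
proof -
  have bdd: "bounded {v. \<phi> v < 1}"
    using funk unfolding funk_metric_space_def Om by auto
  have "(\<lambda>x. f (\<phi> x)) \<in> borel_measurable borel"
    using borel_measurable_minkowski_norm[OF mink] fmeas by measurable
  then have "integral\<^sup>L (BH_measure \<Omega> F) (\<lambda>x. f (\<phi> x))
      = CARD('n) * omega TYPE('n) * (LBINT t=0..1. f t * t ^ (CARD('n) - 1))"
    using integral_BH_measure_funk[OF funk] convex_minkowski_norm_sublevel[OF mink]
      set_integral_minkowski_norm[OF mink bdd fmeas] measure_minkowski_norm_sublevel_pos[OF mink bdd]
    unfolding Om by simp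
  moreover have "set_integrable lborel {0<..<1} (\<lambda>t. f t * t ^ (CARD('n) - 1))"
    using set_integrable_minkowski_norm[OF mink bdd fmeas fint[unfolded Om]]
    by (rule set_integrable_subset) auto
  moreover have "(\<lambda>t. f t * t ^ (CARD('n) - 1)) \<in> borel_measurable borel"
    using fmeas by measurable
  ultimately show ?thesis
    using interval_integral_exp_substitution[of "\<lambda>t. f t * t ^ (CARD('n) - 1)"] by (simp add: ac_simps)
qed

end
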